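(* Let $\Omega\subset\mathbb{R}^n$ be a non-empty bounded open set, let $f:[0,\rho_\Omega]\to\mathbb{R}$ be continuous, and assume that $u(x)=f(d_{\partial\Omega}(x))$ is a viscosity solution of $-\Delta_\infty u=1$ in $\Omega$. Then: (i) $f$ is monotone increasing on $[0,\rho_\Omega]$, i.e. $f(t_1)\le f(t_2)$ whenever $0\le t_1<t_2\le\rho_\Omega$; (ii) the function $v(z)=f(\rho_\Omega-|z|)$ is a viscosity solution of $-\Delta_\infty v=1$ in $B_{\rho_\Omega}(0)\setminus\{0\}$.
   Context: $d_{\partial\Omega}(x)=\min_{y\in\partial\Omega}|x-y|$; $\rho_\Omega=\max_{\overline\Omega}d_{\partial\Omega}$. $\Delta_\infty\varphi=\langle D^2\varphi\,\nabla\varphi,\nabla\varphi\rangle$. For an open set $A$, a function $w\in C^0(A)$ is a viscosity solution of $-\Delta_\infty w=1$ in $A$ if: whenever $\varphi\in C^2(A)$ and $\varphi-w$ has a local minimum at $x_0\in A$, then $-\Delta_\infty\varphi(x_0)\le1$; and whenever $\varphi\in C^2(A)$ and $\varphi-w$ has a local maximum at $x_0\in A$, then $-\Delta_\infty\varphi(x_0)\ge1$. *)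

theory Defs
  imports "HOL-Analysis.Analysis"
begin

definition bdist :: "'a::euclidean_space set \<Rightarrow> 'a \<Rightarrow> real" where
  "bdist \<Omega> x = infdist x (frontier \<Omega>)"

definition inradius :: "'a::euclidean_space set \<Rightarrow> real" where
  "inradius \<Omega> = Sup (bdist \<Omega> ` closure \<Omega>)"

definition grad :: "('a::euclidean_space \<Rightarrow> real) \<Rightarrow> 'a \<Rightarrow> 'a" where
  "grad \<phi> x = (SOME g. (\<phi> has_derivative (\<lambda>h. g \<bullet> h)) (at x))"

definition hess :: "('a::euclidean_space \<Rightarrow> real) \<Rightarrow> 'a \<Rightarrow> 'a \<Rightarrow> 'a" where
  "hess \<phi> x = frechet_derivative (grad \<phi>) (at x)"

definition inf_laplacian :: "('a::euclidean_space \<Rightarrow> real) \<Rightarrow> 'a \<Rightarrow> real" where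
  "inf_laplacian \<phi> x = hess \<phi> x (grad \<phi> x) \<bullet> grad \<phi> x"

definition C2_on :: "'a::euclidean_space set \<Rightarrow> ('a \<Rightarrow> real) \<Rightarrow> bool" where
  "C2_on A \<phi> \<longleftrightarrow>
     (\<forall>x\<in>A. \<phi> differentiable (at x)) \<and>
     (\<forall>x\<in>A. (\<phi> has_derivative (\<lambda>h. grad \<phi> x \<bullet> h)) (at x)) \<and>
     (\<forall>x\<in>A. grad \<phi> differentiable (at x)) \<and>
     continuous_on A (grad \<phi>) \<and>
     (\<forall>v. continuous_on A (\<lambda>x. hess \<phi> x v))"

definition viscosity_solution :: "'a::euclidean_space set \<Rightarrow> ('a \<Rightarrow> real) \<Rightarrow> bool" where
  "viscosity_solution A w \<longleftrightarrow>
     continuous_on A w \<and>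
     (\<forall>\<phi> x0. C2_on A \<phi> \<and> x0 \<in> A \<and>
        (\<exists>e>0. \<forall>y\<in>A \<inter> ball x0 e. \<phi> x0 - w x0 \<le> \<phi> y - w y)
        \<longrightarrow> - inf_laplacian \<phi> x0 \<le> 1) \<and>
     (\<forall>\<phi> x0. C2_on A \<phi> \<and> x0 \<in> A \<and>
        (\<exists>e>0. \<forall>y\<in>A \<inter> ball x0 e. \<phi> y - w y \<le> \<phi> x0 - w x0)
        \<longrightarrow> - inf_laplacian \<phi> x0 \<ge> 1)"

end

theory Submission
  imports Defs
begin

text \<open>
  Let \<open>xb\<close> be a point where \<open>bdist \<Omega>\<close> attains its maximum \<open>\<rho>\<close> and \<open>y\<close> a boundary point
  nearest to \<open>xb\<close>. Then \<open>\<rho> - |x - xb| \<le> bdist \<Omega> x \<le> |x - y|\<close>, with equality on the segment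
  from \<open>y\<close> to \<open>xb\<close>, along which \<open>bdist \<Omega>\<close> takes every value in \<open>]0, \<rho>]\<close>.

  (i) If \<open>f\<close> decreased somewhere, \<open>f \<circ> bdist \<Omega>\<close> would have a local minimum in \<open>\<Omega>\<close>; testing
  with a constant shows that a viscosity solution of \<open>-\<Delta>\<^sub>\<infinity> u = 1\<close> has none.

  (ii) Let \<open>\<phi>\<close> touch \<open>v\<close> at \<open>z\<close>. Since \<open>v\<close> is radial, so is the gradient of \<open>\<phi>\<close> at \<open>z\<close>, hence
  \<open>\<Delta>\<^sub>\<infinity>\<phi>(z) = \<phi>\<^sub>r\<^sup>2 \<phi>\<^sub>r\<^sub>r\<close>, and the contact yields a one-sided second-order expansion of \<open>f\<close> at
  \<open>\<rho> - |z|\<close>. By (i), \<open>u(x) \<le> f(|x - y|)\<close> and \<open>u(x) \<ge> f(\<rho> - |x - xb|)\<close>, with equality on the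
  segment. So a smooth function of \<open>|x - y|\<close> (resp. \<open>|x - xb|\<close>) with that expansion, up to an
  arbitrarily small convexity error, touches \<open>u\<close> there, and the viscosity inequality for \<open>u\<close>
  turns into the one for \<open>v\<close>.
\<close>

lemma grad_eqI:
  fixes \<phi> :: "'a::euclidean_space \<Rightarrow> real"
  assumes "(\<phi> has_derivative (\<lambda>h. g \<bullet> h)) (at x)"
  shows "grad \<phi> x = g"
proof -
  have "(\<phi> has_derivative (\<lambda>h. grad \<phi> x \<bullet> h)) (at x)"
    unfolding grad_def by (rule someI[of _ g]) (rule assms)
  with assms have "(\<lambda>h. grad \<phi> x \<bullet> h) = (\<lambda>h. g \<bullet> h)"
    using has_derivative_unique by blast
  then show ?thesis
    by (metis euclidean_eqI)
qed

lemma C2_on_grad_hess: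
  fixes \<phi> :: "'a::euclidean_space \<Rightarrow> real"
  assumes \<phi>: "\<And>x. (\<phi> has_derivative (\<lambda>h. G x \<bullet> h)) (at x)"
    and G: "\<And>x. (G has_derivative H x) (at x)"
    and H: "\<And>v. continuous_on A (\<lambda>x. H x v)"
  shows "C2_on A \<phi>" and "grad \<phi> = G" and "hess \<phi> = H"
proof -
  show grad: "grad \<phi> = G"
    using grad_eqI[OF \<phi>] by blast
  show hess: "hess \<phi> = H"
    unfolding hess_def grad using frechet_derivative_at[OF G] by auto
  have "continuous_on A G"
    using G has_derivative_continuous continuous_at_imp_continuous_on by blast
  then show "C2_on A \<phi>"
    unfolding C2_on_def grad hess differentiable_def using \<phi> G H by blast
qed

lemma inf_laplacian_grad_parallel:
  fixes \<phi> :: "'a::euclidean_space \<Rightarrow> real"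
  assumes "C2_on A \<phi>" "x \<in> A" "grad \<phi> x = k *\<^sub>R e"
  shows "inf_laplacian \<phi> x = k\<^sup>2 * (hess \<phi> x e \<bullet> e)"
proof -
  have "(grad \<phi> has_derivative hess \<phi> x) (at x)"
    using assms unfolding C2_on_def hess_def by (simp add: frechet_derivative_works)
  then have lin: "linear (hess \<phi> x)"
    using has_derivative_linear by blast
  show ?thesis
    unfolding inf_laplacian_def assms(3) linear_cmul[OF lin] by (simp add: power2_eq_square)
qed

lemma
  fixes A :: "'a::euclidean_space set" and x :: 'a
  shows C2_on_const: "C2_on A (\<lambda>_. c)"
    and inf_laplacian_const: "inf_laplacian (\<lambda>_::'a. c) x = 0"
proof -
  have "((\<lambda>_. c) has_derivative (\<lambda>h. 0 \<bullet> h)) (at y)" for y :: 'a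
    by simp
  note const = C2_on_grad_hess[OF this has_derivative_const, where A = A]
  show "C2_on A (\<lambda>_. c)"
    using const by simp
  show "inf_laplacian (\<lambda>_::'a. c) x = 0"
    using const unfolding inf_laplacian_def by simp
qed

text \<open>A polynomial in \<open>|x - c|\<^sup>2\<close> rather than in \<open>|x - c|\<close>, so that it is smooth also at \<open>c\<close>.\<close>

definition sqdist_quadratic :: "'a::euclidean_space \<Rightarrow> real \<Rightarrow> real \<Rightarrow> real \<Rightarrow> real \<Rightarrow> 'a \<Rightarrow> real" where
  "sqdist_quadratic c s a B C x = a + B * ((x - c) \<bullet> (x - c) - s\<^sup>2) + C * ((x - c) \<bullet> (x - c) - s\<^sup>2)\<^sup>2"

lemma
  fixes c :: "'a::euclidean_space" and A :: "'a set"
  shows C2_on_sqdist_quadratic: "C2_on A (sqdist_quadratic c s a B C)"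
    and inf_laplacian_sqdist_quadratic: "dist x c = s \<Longrightarrow>
          inf_laplacian (sqdist_quadratic c s a B C) x = 4 * B\<^sup>2 * s\<^sup>2 * (8 * C * s\<^sup>2 + 2 * B)"
proof -
  define q where "q x = (x - c) \<bullet> (x - c) - s\<^sup>2" for x
  define G where "G x = (2 * B + 4 * C * q x) *\<^sub>R (x - c)" for x
  define H where "H x v = (8 * C * ((x - c) \<bullet> v)) *\<^sub>R (x - c) + (2 * B + 4 * C * q x) *\<^sub>R v" for x v
  have "(sqdist_quadratic c s a B C has_derivative (\<lambda>h. G x \<bullet> h)) (at x)" for x
    unfolding sqdist_quadratic_def[abs_def] q_def G_def
    by (auto intro!: derivative_eq_intros ext simp: algebra_simps inner_commute power2_eq_square)
  moreover have "(G has_derivative H x) (at x)" for x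
    unfolding G_def[abs_def] H_def q_def
    by (auto intro!: derivative_eq_intros ext simp: algebra_simps inner_commute)
  moreover have "continuous_on A (\<lambda>x. H x v)" for v
    unfolding H_def q_def by (intro continuous_intros)
  ultimately have C2: "C2_on A (sqdist_quadratic c s a B C)"
    and grad: "grad (sqdist_quadratic c s a B C) = G" and hess: "hess (sqdist_quadratic c s a B C) = H"
    by (rule C2_on_grad_hess)+
  then show "C2_on A (sqdist_quadratic c s a B C)"
    by blast
  assume "dist x c = s"
  then have sphere: "(x - c) \<bullet> (x - c) = s\<^sup>2"
    by (simp add: dist_norm power2_norm_eq_inner[symmetric])
  then show "inf_laplacian (sqdist_quadratic c s a B C) x = 4 * B\<^sup>2 * s\<^sup>2 * (8 * C * s\<^sup>2 + 2 * B)"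
    unfolding inf_laplacian_def grad hess G_def H_def q_def
    by (simp add: inner_add_left inner_scaleR_left inner_scaleR_right)
      (simp add: power2_eq_square algebra_simps)
qed

lemma sqdist_quadratic_expansion:
  fixes c x :: "'a::euclidean_space" and s :: real
  defines "h \<equiv> dist x c - s"
  shows "sqdist_quadratic c s a B C x = a + 2 * s * B * h + (B + 4 * s\<^sup>2 * C) * h\<^sup>2 + h\<^sup>2 * (C * h * (4 * s + h))"
proof -
  have "(x - c) \<bullet> (x - c) - s\<^sup>2 = h * (2 * s + h)"
    unfolding h_def by (simp add: dist_norm power2_norm_eq_inner[symmetric] algebra_simps power2_eq_square)
  then show ?thesis
    unfolding sqdist_quadratic_def by (simp add: algebra_simps power2_eq_square)
qed

lemma radial_test_function:
  fixes c :: "'a::euclidean_space" and A :: "'a set"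
  assumes s: "s > 0" and \<epsilon>: "\<epsilon> > 0"
  obtains \<psi> where "C2_on A \<psi>"
    and "\<And>x. dist x c = s \<Longrightarrow> \<psi> x = a"
    and "\<And>x. dist x c = s \<Longrightarrow> inf_laplacian \<psi> x = 2 * b1\<^sup>2 * b2"
    and "\<exists>\<delta>>0. \<forall>x. \<bar>dist x c - s\<bar> < \<delta> \<longrightarrow>
           \<bar>\<psi> x - (a + b1 * (dist x c - s) + b2 * (dist x c - s)\<^sup>2)\<bar> \<le> \<epsilon> * (dist x c - s)\<^sup>2"
proof
  define B where "B = b1 / (2 * s)"
  define C where "C = (b2 - B) / (4 * s\<^sup>2)"
  have coeffs: "2 * s * B = b1" "B + 4 * s\<^sup>2 * C = b2"
    using s by (simp_all add: B_def C_def)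
  show "C2_on A (sqdist_quadratic c s a B C)"
    by (rule C2_on_sqdist_quadratic)
  show "sqdist_quadratic c s a B C x = a" if "dist x c = s" for x
    using that sqdist_quadratic_expansion[of c s a B C x] by simp
  show "inf_laplacian (sqdist_quadratic c s a B C) x = 2 * b1\<^sup>2 * b2" if "dist x c = s" for x
    unfolding inf_laplacian_sqdist_quadratic[OF that] coeffs(1)[symmetric] coeffs(2)[symmetric]
    using s by (simp add: power2_eq_square algebra_simps)
  define D where "D = \<bar>C\<bar> * (4 * s + 1) + 1"
  have D: "D > 0"
    unfolding D_def using s by (simp add: add_nonneg_pos)
  have "\<bar>sqdist_quadratic c s a B C x - (a + b1 * h + b2 * h\<^sup>2)\<bar> \<le> \<epsilon> * h\<^sup>2"
    if h: "h = dist x c - s" "\<bar>h\<bar> < min 1 (\<epsilon> / D)" for x h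
  proof -
    have "\<bar>C * h * (4 * s + h)\<bar> \<le> \<bar>C\<bar> * \<bar>h\<bar> * (4 * s + 1)"
      using h s unfolding abs_mult by (intro mult_left_mono) auto
    also have "\<dots> \<le> D * \<bar>h\<bar>"
      unfolding D_def by (simp add: algebra_simps)
    also have "\<dots> \<le> \<epsilon>"
      using h D by (simp add: field_simps)
    finally have "\<bar>C * h * (4 * s + h)\<bar> \<le> \<epsilon>" .
    then show ?thesis
      unfolding sqdist_quadratic_expansion h(1)[symmetric] coeffs
      by (simp add: abs_mult mult.commute[of \<epsilon>] mult_left_mono)
  qed
  then show "\<exists>\<delta>>0. \<forall>x. \<bar>dist x c - s\<bar> < \<delta> \<longrightarrow>
      \<bar>sqdist_quadratic c s a B C x - (a + b1 * (dist x c - s) + b2 * (dist x c - s)\<^sup>2)\<bar> \<le> \<epsilon> * (dist x c - s)\<^sup>2"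
    using \<epsilon> D by (intro exI[of _ "min 1 (\<epsilon> / D)"]) auto
qed

lemma second_order_expansion:
  fixes k k' :: "real \<Rightarrow> real"
  assumes d: "d > 0"
    and k: "\<And>t. \<bar>t - r\<bar> < d \<Longrightarrow> (k has_real_derivative k' t) (at t)"
    and k': "(k' has_real_derivative k2) (at r)"
    and \<epsilon>: "\<epsilon> > 0"
  shows "\<exists>\<delta>>0. \<forall>t. \<bar>t - r\<bar> < \<delta> \<longrightarrow>
           \<bar>k t - k r - k' r * (t - r) - k2 / 2 * (t - r)\<^sup>2\<bar> \<le> \<epsilon> * (t - r)\<^sup>2"
proof -
  obtain s where s: "s > 0"
    and k'_lin: "\<And>z. \<bar>z - r\<bar> < s \<Longrightarrow> \<bar>k' z - k' r - k2 * (z - r)\<bar> \<le> \<epsilon> * \<bar>z - r\<bar>"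
    using k' \<epsilon> unfolding has_field_derivative_def has_derivative_at_alt by force
  define e where "e t = k t - k' r * t - k2 / 2 * (t - r)\<^sup>2" for t
  have "\<bar>e t - e r\<bar> \<le> \<epsilon> * (t - r)\<^sup>2" if t: "\<bar>t - r\<bar> < min s d" for t
  proof -
    have near: "\<bar>z - r\<bar> \<le> \<bar>t - r\<bar>" if "z \<in> closed_segment r t" for z
      using dist_in_closed_segment[OF that] by (simp add: dist_real_def abs_minus_commute)
    have "norm (e t - e r) \<le> \<epsilon> * \<bar>t - r\<bar> * norm (t - r)"
    proof (rule field_differentiable_bound[where S = "closed_segment r t" and f' = "\<lambda>z. k' z - k' r - k2 * (z - r)"])
      fix z assume z: "z \<in> closed_segment r t"
      have "\<bar>z - r\<bar> < d" "\<bar>z - r\<bar> < s"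
        using near[OF z] t by linarith+
      then have "(k has_real_derivative k' z) (at z within closed_segment r t)"
        using k has_field_derivative_at_within by blast
      then show "(e has_real_derivative k' z - k' r - k2 * (z - r)) (at z within closed_segment r t)"
        unfolding e_def[abs_def] by (auto intro!: derivative_eq_intros simp: field_simps)
      have "\<bar>k' z - k' r - k2 * (z - r)\<bar> \<le> \<epsilon> * \<bar>z - r\<bar>"
        by (rule k'_lin) fact
      also have "\<dots> \<le> \<epsilon> * \<bar>t - r\<bar>"
        using near[OF z] \<epsilon> by (simp add: mult_left_mono)
      finally show "norm (k' z - k' r - k2 * (z - r)) \<le> \<epsilon> * \<bar>t - r\<bar>"
        by simp
    qed simp_all
    then show ?thesis
      by (simp add: power2_eq_square mult.assoc)
  qed
  moreover have "e t - e r = k t - k r - k' r * (t - r) - k2 / 2 * (t - r)\<^sup>2" for t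
    unfolding e_def by (simp add: algebra_simps)
  ultimately show ?thesis
    using s d by (intro exI[of _ "min s d"]) auto
qed

lemma line_in_neighbourhood:
  fixes z v :: "'a::real_normed_vector"
  assumes "open P" "z \<in> P" "\<exists>e>0. \<forall>y\<in>P \<inter> ball z e. Q y"
  shows "\<exists>\<delta>>0. \<forall>t. \<bar>t\<bar> < \<delta> \<longrightarrow> Q (z + t *\<^sub>R v)"
proof -
  obtain e1 where e1: "e1 > 0" "ball z e1 \<subseteq> P"
    using assms(1,2) open_contains_ball by blast
  obtain e2 where e2: "e2 > 0" "\<forall>y\<in>P \<inter> ball z e2. Q y"
    using assms(3) by blast
  have v: "norm v + 1 > 0"
    by (simp add: add_nonneg_pos)
  define \<delta> where "\<delta> = min e1 e2 / (norm v + 1)"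
  have "Q (z + t *\<^sub>R v)" if t: "\<bar>t\<bar> < \<delta>" for t
  proof -
    have "dist z (z + t *\<^sub>R v) = \<bar>t\<bar> * norm v"
      by (simp add: dist_norm)
    also have "\<dots> \<le> \<bar>t\<bar> * (norm v + 1)"
      by (simp add: mult_left_mono)
    also have "\<dots> < min e1 e2"
      using t v unfolding \<delta>_def by (simp add: pos_less_divide_eq del: min_less_iff_conj)
    finally show ?thesis
      using e1 e2 by auto
  qed
  moreover have "\<delta> > 0"
    unfolding \<delta>_def using e1 e2 v by simp
  ultimately show ?thesis
    by blast
qed

lemma C2_on_line_expansion:
  fixes \<phi> :: "'a::euclidean_space \<Rightarrow> real"
  assumes \<phi>: "C2_on P \<phi>" and P: "open P" "z \<in> P" and \<epsilon>: "\<epsilon> > 0"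
  shows "\<exists>\<delta>>0. \<forall>t. \<bar>t\<bar> < \<delta> \<longrightarrow>
           \<bar>\<phi> (z + t *\<^sub>R v) - \<phi> z - (grad \<phi> z \<bullet> v) * t - (hess \<phi> z v \<bullet> v) / 2 * t\<^sup>2\<bar> \<le> \<epsilon> * t\<^sup>2"
proof -
  have line: "((\<lambda>t. z + t *\<^sub>R v) has_derivative (\<lambda>t. t *\<^sub>R v)) (at t)" for t
    by (auto intro!: derivative_eq_intros)
  have "\<exists>e>0. \<forall>y\<in>P \<inter> ball z e. y \<in> P"
    by (intro exI[of _ 1]) auto
  then obtain d where d: "d > 0" "\<And>t. \<bar>t\<bar> < d \<Longrightarrow> z + t *\<^sub>R v \<in> P"
    using line_in_neighbourhood[OF P] by blast
  have k: "((\<lambda>t. \<phi> (z + t *\<^sub>R v)) has_real_derivative grad \<phi> (z + t *\<^sub>R v) \<bullet> v) (at t)"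
    if "\<bar>t - 0\<bar> < d" for t
  proof -
    have "(\<phi> has_derivative (\<lambda>h. grad \<phi> (z + t *\<^sub>R v) \<bullet> h)) (at (z + t *\<^sub>R v))"
      using \<phi> d(2)[of t] that unfolding C2_on_def by simp
    from diff_chain_at[OF line this] show ?thesis
      unfolding has_field_derivative_def o_def by (simp add: mult_commute_abs)
  qed
  have k': "((\<lambda>t. grad \<phi> (z + t *\<^sub>R v) \<bullet> v) has_real_derivative hess \<phi> z v \<bullet> v) (at 0)"
  proof -
    have dgrad: "(grad \<phi> has_derivative hess \<phi> z) (at (z + 0 *\<^sub>R v))"
      using \<phi> P unfolding C2_on_def hess_def by (simp add: frechet_derivative_works)
    then have lin: "linear (hess \<phi> z)"
      using has_derivative_linear by blast
    from diff_chain_at[OF line dgrad]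
    have "((\<lambda>t. grad \<phi> (z + t *\<^sub>R v)) has_derivative (\<lambda>t. hess \<phi> z (t *\<^sub>R v))) (at 0)"
      by (simp add: o_def)
    then have "((\<lambda>t. grad \<phi> (z + t *\<^sub>R v) \<bullet> v) has_derivative (\<lambda>t. hess \<phi> z (t *\<^sub>R v) \<bullet> v)) (at 0)"
      by (auto intro!: derivative_eq_intros)
    then show ?thesis
      unfolding has_field_derivative_def linear_cmul[OF lin] by (simp add: mult_commute_abs)
  qed
  from second_order_expansion[OF d(1) k k' \<epsilon>] show ?thesis
    by simp
qed

lemma touching_below_line_bound:
  fixes \<phi> w :: "'a::euclidean_space \<Rightarrow> real"
  assumes \<phi>: "C2_on P \<phi>" and P: "open P" "z \<in> P" and \<epsilon>: "\<epsilon> > 0"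
    and touch: "\<exists>e>0. \<forall>y\<in>P \<inter> ball z e. \<phi> z - w z \<le> \<phi> y - w y"
  shows "\<exists>\<delta>>0. \<forall>t. \<bar>t\<bar> < \<delta> \<longrightarrow>
           w (z + t *\<^sub>R v) \<le> w z + (grad \<phi> z \<bullet> v) * t + ((hess \<phi> z v \<bullet> v) / 2 + \<epsilon>) * t\<^sup>2"
proof -
  obtain \<delta>1 where "\<delta>1 > 0" and \<delta>1: "\<forall>t. \<bar>t\<bar> < \<delta>1 \<longrightarrow>
      \<bar>\<phi> (z + t *\<^sub>R v) - \<phi> z - (grad \<phi> z \<bullet> v) * t - (hess \<phi> z v \<bullet> v) / 2 * t\<^sup>2\<bar> \<le> \<epsilon> * t\<^sup>2"
    using C2_on_line_expansion[OF \<phi> P \<epsilon>] by blast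
  obtain \<delta>2 where "\<delta>2 > 0" and \<delta>2: "\<forall>t. \<bar>t\<bar> < \<delta>2 \<longrightarrow> \<phi> z - w z \<le> \<phi> (z + t *\<^sub>R v) - w (z + t *\<^sub>R v)"
    using line_in_neighbourhood[OF P touch] by blast
  have "w (z + t *\<^sub>R v) \<le> w z + (grad \<phi> z \<bullet> v) * t + ((hess \<phi> z v \<bullet> v) / 2 + \<epsilon>) * t\<^sup>2"
    if "\<bar>t\<bar> < min \<delta>1 \<delta>2" for t
    using \<delta>1[rule_format, of t] \<delta>2[rule_format, of t] that by (auto simp: abs_le_iff ring_distribs)
  then show ?thesis
    using \<open>\<delta>1 > 0\<close> \<open>\<delta>2 > 0\<close> by (intro exI[of _ "min \<delta>1 \<delta>2"]) auto
qed

lemma touching_above_line_bound: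
  fixes \<phi> w :: "'a::euclidean_space \<Rightarrow> real"
  assumes \<phi>: "C2_on P \<phi>" and P: "open P" "z \<in> P" and \<epsilon>: "\<epsilon> > 0"
    and touch: "\<exists>e>0. \<forall>y\<in>P \<inter> ball z e. \<phi> y - w y \<le> \<phi> z - w z"
  shows "\<exists>\<delta>>0. \<forall>t. \<bar>t\<bar> < \<delta> \<longrightarrow>
           w z + (grad \<phi> z \<bullet> v) * t + ((hess \<phi> z v \<bullet> v) / 2 - \<epsilon>) * t\<^sup>2 \<le> w (z + t *\<^sub>R v)"
proof -
  obtain \<delta>1 where "\<delta>1 > 0" and \<delta>1: "\<forall>t. \<bar>t\<bar> < \<delta>1 \<longrightarrow>
      \<bar>\<phi> (z + t *\<^sub>R v) - \<phi> z - (grad \<phi> z \<bullet> v) * t - (hess \<phi> z v \<bullet> v) / 2 * t\<^sup>2\<bar> \<le> \<epsilon> * t\<^sup>2"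
    using C2_on_line_expansion[OF \<phi> P \<epsilon>] by blast
  obtain \<delta>2 where "\<delta>2 > 0" and \<delta>2: "\<forall>t. \<bar>t\<bar> < \<delta>2 \<longrightarrow> \<phi> (z + t *\<^sub>R v) - w (z + t *\<^sub>R v) \<le> \<phi> z - w z"
    using line_in_neighbourhood[OF P touch] by blast
  have "w z + (grad \<phi> z \<bullet> v) * t + ((hess \<phi> z v \<bullet> v) / 2 - \<epsilon>) * t\<^sup>2 \<le> w (z + t *\<^sub>R v)"
    if "\<bar>t\<bar> < min \<delta>1 \<delta>2" for t
    using \<delta>1[rule_format, of t] \<delta>2[rule_format, of t] that by (auto simp: abs_le_iff ring_distribs)
  then show ?thesis
    using \<open>\<delta>1 > 0\<close> \<open>\<delta>2 > 0\<close> by (intro exI[of _ "min \<delta>1 \<delta>2"]) auto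
qed

lemma norm_rotation:
  fixes z v :: "'a::real_inner"
  assumes "z \<bullet> v = 0" "v \<bullet> v = z \<bullet> z"
  shows "norm (cos \<theta> *\<^sub>R z + sin \<theta> *\<^sub>R v) = norm z"
proof -
  have "(cos \<theta> *\<^sub>R z + sin \<theta> *\<^sub>R v) \<bullet> (cos \<theta> *\<^sub>R z + sin \<theta> *\<^sub>R v) =
      cos \<theta> * cos \<theta> * (z \<bullet> z) + sin \<theta> * sin \<theta> * (z \<bullet> z)"
    using assms by (simp add: inner_add_left inner_add_right inner_commute)
  also have "\<dots> = z \<bullet> z"
    by (metis distrib_right mult_1 sin_cos_squared_add3)
  finally show ?thesis
    by (simp add: norm_eq_sqrt_inner)
qed

lemma tangential_derivative_zero_at_sphere_extremum:
  fixes \<phi> :: "'a::euclidean_space \<Rightarrow> real"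
  assumes d\<phi>: "(\<phi> has_derivative (\<lambda>h. g \<bullet> h)) (at z)"
    and v: "z \<bullet> v = 0" "norm v = norm z"
    and extremum: "\<exists>e>0. (\<forall>y\<in>ball z e. norm y = norm z \<longrightarrow> \<phi> z \<le> \<phi> y) \<or>
                         (\<forall>y\<in>ball z e. norm y = norm z \<longrightarrow> \<phi> y \<le> \<phi> z)"
  shows "g \<bullet> v = 0"
proof -
  define \<gamma> where "\<gamma> \<theta> = cos \<theta> *\<^sub>R z + sin \<theta> *\<^sub>R v" for \<theta>
  have "norm (\<gamma> \<theta>) = norm z" for \<theta>
    unfolding \<gamma>_def using v by (intro norm_rotation) (simp_all add: power2_norm_eq_inner[symmetric])
  moreover have "((\<lambda>\<theta>. \<phi> (\<gamma> \<theta>)) has_real_derivative g \<bullet> v) (at 0)"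
  proof -
    have "(\<gamma> has_derivative (\<lambda>t. t *\<^sub>R v)) (at 0)"
      unfolding \<gamma>_def[abs_def] by (auto intro!: derivative_eq_intros)
    moreover have "(\<phi> has_derivative (\<lambda>h. g \<bullet> h)) (at (\<gamma> 0))"
      using d\<phi> by (simp add: \<gamma>_def)
    ultimately have "((\<phi> \<circ> \<gamma>) has_derivative (\<lambda>h. g \<bullet> h) \<circ> (\<lambda>t. t *\<^sub>R v)) (at 0)"
      by (rule diff_chain_at)
    then show ?thesis
      unfolding has_field_derivative_def o_def by (simp add: mult_commute_abs)
  qed
  moreover obtain e where "e > 0" and e: "(\<forall>y\<in>ball z e. norm y = norm z \<longrightarrow> \<phi> z \<le> \<phi> y) \<or>
                                         (\<forall>y\<in>ball z e. norm y = norm z \<longrightarrow> \<phi> y \<le> \<phi> z)"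
    using extremum by blast
  moreover obtain d where "d > 0" "\<And>\<theta>. \<bar>0 - \<theta>\<bar> < d \<Longrightarrow> \<gamma> \<theta> \<in> ball z e"
  proof -
    have "isCont \<gamma> 0"
      unfolding \<gamma>_def by (intro continuous_intros)
    then show thesis
      using that \<open>e > 0\<close> unfolding continuous_at_eps_delta
      by (force simp: \<gamma>_def dist_real_def dist_commute)
  qed
  moreover have "\<gamma> 0 = z"
    by (simp add: \<gamma>_def)
  ultimately show "g \<bullet> v = 0"
    using DERIV_local_min[of "\<lambda>\<theta>. \<phi> (\<gamma> \<theta>)" "g \<bullet> v" 0 d] DERIV_local_max[of "\<lambda>\<theta>. \<phi> (\<gamma> \<theta>)" "g \<bullet> v" 0 d]
    by metis
qed

lemma grad_parallel_at_sphere_extremum: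
  fixes \<phi> :: "'a::euclidean_space \<Rightarrow> real"
  assumes d\<phi>: "(\<phi> has_derivative (\<lambda>h. g \<bullet> h)) (at z)" and z: "z \<noteq> 0"
    and extremum: "\<exists>e>0. (\<forall>y\<in>ball z e. norm y = norm z \<longrightarrow> \<phi> z \<le> \<phi> y) \<or>
                         (\<forall>y\<in>ball z e. norm y = norm z \<longrightarrow> \<phi> y \<le> \<phi> z)"
  shows "g = (g \<bullet> sgn z) *\<^sub>R sgn z"
proof (rule ccontr)
  define w where "w = g - (g \<bullet> sgn z) *\<^sub>R sgn z"
  assume "g \<noteq> (g \<bullet> sgn z) *\<^sub>R sgn z"
  then have w: "w \<noteq> 0"
    by (simp add: w_def)
  have sgn_z: "sgn z \<bullet> sgn z = 1" "z = norm z *\<^sub>R sgn z"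
    using z by (simp_all add: dot_square_norm norm_sgn sgn_div_norm)
  have zw: "z \<bullet> w = 0"
    by (subst sgn_z(2)) (simp add: w_def inner_diff_right sgn_z(1) inner_commute)
  have "g \<bullet> ((norm z / norm w) *\<^sub>R w) = 0"
    using zw w by (intro tangential_derivative_zero_at_sphere_extremum[OF d\<phi> _ _ extremum]) auto
  moreover have "g \<bullet> w = w \<bullet> w"
    using zw z by (simp add: w_def inner_diff_left sgn_div_norm)
  ultimately show False
    using w z by simp
qed

lemma inf_laplacian_at_sphere_extremum:
  fixes \<phi> :: "'a::euclidean_space \<Rightarrow> real"
  assumes \<phi>: "C2_on P \<phi>" and P: "open P" "z \<in> P" and z: "z \<noteq> 0"
    and extremum: "\<exists>e>0. (\<forall>y\<in>P \<inter> ball z e. norm y = norm z \<longrightarrow> \<phi> z \<le> \<phi> y) \<or>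
                         (\<forall>y\<in>P \<inter> ball z e. norm y = norm z \<longrightarrow> \<phi> y \<le> \<phi> z)"
  shows "inf_laplacian \<phi> z = (grad \<phi> z \<bullet> sgn z)\<^sup>2 * (hess \<phi> z (sgn z) \<bullet> sgn z)"
proof -
  obtain e1 where "e1 > 0" "ball z e1 \<subseteq> P"
    using P open_contains_ball by blast
  moreover obtain e2 where "e2 > 0"
    and "(\<forall>y\<in>P \<inter> ball z e2. norm y = norm z \<longrightarrow> \<phi> z \<le> \<phi> y) \<or>
         (\<forall>y\<in>P \<inter> ball z e2. norm y = norm z \<longrightarrow> \<phi> y \<le> \<phi> z)"
    using extremum by blast
  ultimately have "\<exists>e>0. (\<forall>y\<in>ball z e. norm y = norm z \<longrightarrow> \<phi> z \<le> \<phi> y) \<or>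
                         (\<forall>y\<in>ball z e. norm y = norm z \<longrightarrow> \<phi> y \<le> \<phi> z)"
    by (intro exI[of _ "min e1 e2"]) auto
  moreover have "(\<phi> has_derivative (\<lambda>h. grad \<phi> z \<bullet> h)) (at z)"
    using \<phi> P unfolding C2_on_def by blast
  ultimately show ?thesis
    using grad_parallel_at_sphere_extremum z inf_laplacian_grad_parallel[OF \<phi> P(2)] by blast
qed

lemma norm_add_scaleR_sgn:
  fixes z :: "'a::real_normed_vector"
  assumes "\<bar>h\<bar> < norm z"
  shows "norm (z + h *\<^sub>R sgn z) = norm z + h"
proof -
  have z: "z \<noteq> 0"
    using assms by auto
  then have "norm z *\<^sub>R sgn z = z"
    by (simp add: sgn_div_norm)
  then have "z + h *\<^sub>R sgn z = (norm z + h) *\<^sub>R sgn z"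
    by (simp add: scaleR_add_left)
  then show ?thesis
    using assms z by (simp add: norm_sgn)
qed

lemma radial_touching_below:
  fixes \<phi> :: "'a::euclidean_space \<Rightarrow> real" and g :: "real \<Rightarrow> real"
  assumes \<phi>: "C2_on P \<phi>" and P: "open P" "z \<in> P" and z: "z \<noteq> 0"
    and touch: "\<exists>e>0. \<forall>y\<in>P \<inter> ball z e. \<phi> z - g (norm z) \<le> \<phi> y - g (norm y)"
  shows "inf_laplacian \<phi> z = (grad \<phi> z \<bullet> sgn z)\<^sup>2 * (hess \<phi> z (sgn z) \<bullet> sgn z)"
    and "\<epsilon> > 0 \<Longrightarrow> \<exists>\<delta>>0. \<forall>h. \<bar>h\<bar> < \<delta> \<longrightarrow> g (norm z + h) \<le>
           g (norm z) + (grad \<phi> z \<bullet> sgn z) * h + ((hess \<phi> z (sgn z) \<bullet> sgn z) / 2 + \<epsilon>) * h\<^sup>2"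
proof -
  show "inf_laplacian \<phi> z = (grad \<phi> z \<bullet> sgn z)\<^sup>2 * (hess \<phi> z (sgn z) \<bullet> sgn z)"
    using touch by (intro inf_laplacian_at_sphere_extremum[OF \<phi> P z]) force
next
  assume "\<epsilon> > 0"
  from touching_below_line_bound[where w = "\<lambda>y. g (norm y)", OF \<phi> P this touch]
  obtain \<delta> where "\<delta> > 0" and \<delta>: "\<forall>h. \<bar>h\<bar> < \<delta> \<longrightarrow> g (norm (z + h *\<^sub>R sgn z)) \<le>
      g (norm z) + (grad \<phi> z \<bullet> sgn z) * h + ((hess \<phi> z (sgn z) \<bullet> sgn z) / 2 + \<epsilon>) * h\<^sup>2"
    by blast
  have "g (norm z + h) \<le>
      g (norm z) + (grad \<phi> z \<bullet> sgn z) * h + ((hess \<phi> z (sgn z) \<bullet> sgn z) / 2 + \<epsilon>) * h\<^sup>2"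
    if "\<bar>h\<bar> < min \<delta> (norm z)" for h
    using \<delta>[rule_format, of h] norm_add_scaleR_sgn[of h z] that by simp
  then show "\<exists>\<delta>>0. \<forall>h. \<bar>h\<bar> < \<delta> \<longrightarrow> g (norm z + h) \<le>
      g (norm z) + (grad \<phi> z \<bullet> sgn z) * h + ((hess \<phi> z (sgn z) \<bullet> sgn z) / 2 + \<epsilon>) * h\<^sup>2"
    using \<open>\<delta> > 0\<close> z by (intro exI[of _ "min \<delta> (norm z)"]) auto
qed

lemma radial_touching_above:
  fixes \<phi> :: "'a::euclidean_space \<Rightarrow> real" and g :: "real \<Rightarrow> real"
  assumes \<phi>: "C2_on P \<phi>" and P: "open P" "z \<in> P" and z: "z \<noteq> 0"
    and touch: "\<exists>e>0. \<forall>y\<in>P \<inter> ball z e. \<phi> y - g (norm y) \<le> \<phi> z - g (norm z)"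
  shows "inf_laplacian \<phi> z = (grad \<phi> z \<bullet> sgn z)\<^sup>2 * (hess \<phi> z (sgn z) \<bullet> sgn z)"
    and "\<epsilon> > 0 \<Longrightarrow> \<exists>\<delta>>0. \<forall>h. \<bar>h\<bar> < \<delta> \<longrightarrow>
           g (norm z) + (grad \<phi> z \<bullet> sgn z) * h + ((hess \<phi> z (sgn z) \<bullet> sgn z) / 2 - \<epsilon>) * h\<^sup>2
             \<le> g (norm z + h)"
proof -
  show "inf_laplacian \<phi> z = (grad \<phi> z \<bullet> sgn z)\<^sup>2 * (hess \<phi> z (sgn z) \<bullet> sgn z)"
    using touch by (intro inf_laplacian_at_sphere_extremum[OF \<phi> P z]) force
next
  assume "\<epsilon> > 0"
  from touching_above_line_bound[where w = "\<lambda>y. g (norm y)", OF \<phi> P this touch]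
  obtain \<delta> where "\<delta> > 0" and \<delta>: "\<forall>h. \<bar>h\<bar> < \<delta> \<longrightarrow>
      g (norm z) + (grad \<phi> z \<bullet> sgn z) * h + ((hess \<phi> z (sgn z) \<bullet> sgn z) / 2 - \<epsilon>) * h\<^sup>2
        \<le> g (norm (z + h *\<^sub>R sgn z))"
    by blast
  have "g (norm z) + (grad \<phi> z \<bullet> sgn z) * h + ((hess \<phi> z (sgn z) \<bullet> sgn z) / 2 - \<epsilon>) * h\<^sup>2
      \<le> g (norm z + h)"
    if "\<bar>h\<bar> < min \<delta> (norm z)" for h
    using \<delta>[rule_format, of h] norm_add_scaleR_sgn[of h z] that by simp
  then show "\<exists>\<delta>>0. \<forall>h. \<bar>h\<bar> < \<delta> \<longrightarrow>
      g (norm z) + (grad \<phi> z \<bullet> sgn z) * h + ((hess \<phi> z (sgn z) \<bullet> sgn z) / 2 - \<epsilon>) * h\<^sup>2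
        \<le> g (norm z + h)"
    using \<open>\<delta> > 0\<close> z by (intro exI[of _ "min \<delta> (norm z)"]) auto
qed

lemma le_of_vanishing_perturbation:
  fixes a b c :: real
  assumes "\<And>\<epsilon>. \<epsilon> > 0 \<Longrightarrow> a + \<epsilon> * b \<le> c"
  shows "a \<le> c"
proof -
  have "((\<lambda>\<epsilon>. a + \<epsilon> * b) \<longlongrightarrow> a) (at_right 0)"
    by (auto intro!: tendsto_eq_intros)
  moreover have "\<forall>\<^sub>F \<epsilon> in at_right 0. a + \<epsilon> * b \<le> c"
    using eventually_at_right_less by (rule eventually_mono) (rule assms)
  ultimately show ?thesis
    using trivial_limit_at_right_real by (rule tendsto_upperbound)
qed

lemma viscosity_solution_no_local_min:
  fixes w :: "'a::euclidean_space \<Rightarrow> real"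
  assumes visc: "viscosity_solution A w" and x0: "x0 \<in> A"
  shows "\<not> (\<exists>e>0. \<forall>x\<in>A \<inter> ball x0 e. w x0 \<le> w x)"
proof
  assume "\<exists>e>0. \<forall>x\<in>A \<inter> ball x0 e. w x0 \<le> w x"
  then have "\<exists>e>0. \<forall>x\<in>A \<inter> ball x0 e. (\<lambda>_. w x0) x - w x \<le> (\<lambda>_. w x0) x0 - w x0"
    by simp
  with visc x0 C2_on_const have "- inf_laplacian (\<lambda>_. w x0) x0 \<ge> 1"
    unfolding viscosity_solution_def by blast
  then show False
    by (simp add: inf_laplacian_const)
qed

lemma viscosity_sub_radial_comparison:
  fixes w :: "'a::euclidean_space \<Rightarrow> real" and g :: "real \<Rightarrow> real"
  assumes visc: "viscosity_solution A w"
    and x0: "x0 \<in> A" "dist x0 c = s" "w x0 = g s" and s: "s > 0"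
    and below: "\<exists>e>0. \<forall>x\<in>A \<inter> ball x0 e. w x \<le> g (dist x c)"
    and g: "\<And>\<epsilon>. \<epsilon> > 0 \<Longrightarrow> \<exists>\<delta>>0. \<forall>h. \<bar>h\<bar> < \<delta> \<longrightarrow> g (s + h) \<le> g s + b1 * h + (b2 + \<epsilon>) * h\<^sup>2"
  shows "- (2 * b1\<^sup>2 * b2) \<le> 1"
proof (rule le_of_vanishing_perturbation)
  fix \<epsilon> :: real
  assume \<epsilon>: "\<epsilon> > 0"
  \<comment> \<open>Touch \<open>w\<close> from above at \<open>x0\<close> by a radial function about \<open>c\<close> slightly more convex than \<open>g\<close>.\<close>
  obtain \<psi> where \<psi>: "C2_on A \<psi>" "\<psi> x0 = g s" "inf_laplacian \<psi> x0 = 2 * b1\<^sup>2 * (b2 + 2 * \<epsilon>)"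
    and "\<exists>\<delta>>0. \<forall>x. \<bar>dist x c - s\<bar> < \<delta> \<longrightarrow>
      \<bar>\<psi> x - (g s + b1 * (dist x c - s) + (b2 + 2 * \<epsilon>) * (dist x c - s)\<^sup>2)\<bar> \<le> \<epsilon> * (dist x c - s)\<^sup>2"
    using radial_test_function[OF s \<epsilon>, of A c "g s" b1 "b2 + 2 * \<epsilon>"] x0(2) by metis
  then obtain \<delta>1 where "\<delta>1 > 0" and \<delta>1: "\<And>x. \<bar>dist x c - s\<bar> < \<delta>1 \<Longrightarrow>
      \<bar>\<psi> x - (g s + b1 * (dist x c - s) + (b2 + 2 * \<epsilon>) * (dist x c - s)\<^sup>2)\<bar> \<le> \<epsilon> * (dist x c - s)\<^sup>2"
    by blast
  obtain \<delta>2 where "\<delta>2 > 0" and \<delta>2: "\<And>h. \<bar>h\<bar> < \<delta>2 \<Longrightarrow> g (s + h) \<le> g s + b1 * h + (b2 + \<epsilon>) * h\<^sup>2"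
    using g[OF \<epsilon>] by blast
  obtain e where "e > 0" and e: "\<And>x. x \<in> A \<inter> ball x0 e \<Longrightarrow> w x \<le> g (dist x c)"
    using below by blast
  have "\<psi> x0 - w x0 \<le> \<psi> x - w x" if x: "x \<in> A \<inter> ball x0 (min e (min \<delta>1 \<delta>2))" for x
  proof -
    have "\<bar>dist x c - s\<bar> \<le> dist x x0"
      using x0(2) dist_triangle[of x c x0] dist_triangle[of x0 c x] by (auto simp: dist_commute)
    then have h: "\<bar>dist x c - s\<bar> < \<delta>1" "\<bar>dist x c - s\<bar> < \<delta>2"
      using x by (auto simp: dist_commute)
    have "w x \<le> g (s + (dist x c - s))"
      using e x by simp
    also have "\<dots> \<le> g s + b1 * (dist x c - s) + (b2 + \<epsilon>) * (dist x c - s)\<^sup>2"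
      using \<delta>2 h(2) .
    also have "\<dots> \<le> \<psi> x"
      using \<delta>1[OF h(1)] by (simp add: abs_le_iff ring_distribs)
    finally show ?thesis
      using \<psi>(2) x0(3) by simp
  qed
  then have "- inf_laplacian \<psi> x0 \<le> 1"
    using visc \<psi>(1) x0(1) \<open>e > 0\<close> \<open>\<delta>1 > 0\<close> \<open>\<delta>2 > 0\<close> unfolding viscosity_solution_def
    by (metis min_less_iff_conj)
  then show "- (2 * b1\<^sup>2 * b2) + \<epsilon> * (- 4 * b1\<^sup>2) \<le> 1"
    unfolding \<psi>(3) by (simp add: algebra_simps)
qed

lemma viscosity_super_radial_comparison:
  fixes w :: "'a::euclidean_space \<Rightarrow> real" and g :: "real \<Rightarrow> real"
  assumes visc: "viscosity_solution A w"
    and x0: "x0 \<in> A" "dist x0 c = s" "w x0 = g s" and s: "s > 0"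
    and above: "\<exists>e>0. \<forall>x\<in>A \<inter> ball x0 e. g (dist x c) \<le> w x"
    and g: "\<And>\<epsilon>. \<epsilon> > 0 \<Longrightarrow> \<exists>\<delta>>0. \<forall>h. \<bar>h\<bar> < \<delta> \<longrightarrow> g s + b1 * h + (b2 - \<epsilon>) * h\<^sup>2 \<le> g (s + h)"
  shows "- (2 * b1\<^sup>2 * b2) \<ge> 1"
proof -
  have "2 * b1\<^sup>2 * b2 + \<epsilon> * (- 4 * b1\<^sup>2) \<le> - 1" if \<epsilon>: "\<epsilon> > 0" for \<epsilon>
  proof -
    obtain \<psi> where \<psi>: "C2_on A \<psi>" "\<psi> x0 = g s" "inf_laplacian \<psi> x0 = 2 * b1\<^sup>2 * (b2 - 2 * \<epsilon>)"
      and "\<exists>\<delta>>0. \<forall>x. \<bar>dist x c - s\<bar> < \<delta> \<longrightarrow>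
        \<bar>\<psi> x - (g s + b1 * (dist x c - s) + (b2 - 2 * \<epsilon>) * (dist x c - s)\<^sup>2)\<bar> \<le> \<epsilon> * (dist x c - s)\<^sup>2"
      using radial_test_function[OF s \<epsilon>, of A c "g s" b1 "b2 - 2 * \<epsilon>"] x0(2) by metis
    then obtain \<delta>1 where "\<delta>1 > 0" and \<delta>1: "\<And>x. \<bar>dist x c - s\<bar> < \<delta>1 \<Longrightarrow>
        \<bar>\<psi> x - (g s + b1 * (dist x c - s) + (b2 - 2 * \<epsilon>) * (dist x c - s)\<^sup>2)\<bar> \<le> \<epsilon> * (dist x c - s)\<^sup>2"
      by blast
    obtain \<delta>2 where "\<delta>2 > 0" and \<delta>2: "\<And>h. \<bar>h\<bar> < \<delta>2 \<Longrightarrow> g s + b1 * h + (b2 - \<epsilon>) * h\<^sup>2 \<le> g (s + h)"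
      using g[OF \<epsilon>] by blast
    obtain e where "e > 0" and e: "\<And>x. x \<in> A \<inter> ball x0 e \<Longrightarrow> g (dist x c) \<le> w x"
      using above by blast
    have "\<psi> x - w x \<le> \<psi> x0 - w x0" if x: "x \<in> A \<inter> ball x0 (min e (min \<delta>1 \<delta>2))" for x
    proof -
      have "\<bar>dist x c - s\<bar> \<le> dist x x0"
        using x0(2) dist_triangle[of x c x0] dist_triangle[of x0 c x] by (auto simp: dist_commute)
      then have h: "\<bar>dist x c - s\<bar> < \<delta>1" "\<bar>dist x c - s\<bar> < \<delta>2"
        using x by (auto simp: dist_commute)
      have "\<psi> x \<le> g s + b1 * (dist x c - s) + (b2 - \<epsilon>) * (dist x c - s)\<^sup>2"
        using \<delta>1[OF h(1)] by (simp add: abs_le_iff ring_distribs)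
      also have "\<dots> \<le> g (s + (dist x c - s))"
        using \<delta>2 h(2) .
      also have "\<dots> \<le> w x"
        using e x by simp
      finally show ?thesis
        using \<psi>(2) x0(3) by simp
    qed
    then have "- inf_laplacian \<psi> x0 \<ge> 1"
      using visc \<psi>(1) x0(1) \<open>e > 0\<close> \<open>\<delta>1 > 0\<close> \<open>\<delta>2 > 0\<close> unfolding viscosity_solution_def
      by (metis min_less_iff_conj)
    then show ?thesis
      unfolding \<psi>(3) by (simp add: algebra_simps)
  qed
  then have "2 * b1\<^sup>2 * b2 \<le> - 1"
    by (rule le_of_vanishing_perturbation)
  then show ?thesis
    by simp
qed

lemma bdist_le_dist_frontier: "y \<in> frontier \<Omega> \<Longrightarrow> bdist \<Omega> x \<le> dist x y"
  unfolding bdist_def by (rule infdist_le)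

lemma bdist_lipschitz: "\<bar>bdist \<Omega> x - bdist \<Omega> y\<bar> \<le> dist x y"
  unfolding bdist_def by (rule infdist_triangle_abs)

lemma ball_bdist_subset:
  assumes "x \<in> \<Omega>"
  shows "ball x (bdist \<Omega> x) \<subseteq> \<Omega>"
proof (rule ccontr)
  assume not_sub: "\<not> ball x (bdist \<Omega> x) \<subseteq> \<Omega>"
  then have "x \<in> ball x (bdist \<Omega> x)"
    by (metis ball_empty centre_in_ball empty_subsetI not_le)
  then have "ball x (bdist \<Omega> x) \<inter> frontier \<Omega> \<noteq> {}"
    using connected_Int_frontier[OF connected_ball] not_sub assms by blast
  then obtain z where "z \<in> frontier \<Omega>" "dist x z < bdist \<Omega> x"
    by auto
  then show False
    using bdist_le_dist_frontier[of z \<Omega> x] by simp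
qed

lemma inradius_witnesses:
  fixes \<Omega> :: "'a::euclidean_space set"
  assumes "open \<Omega>" "bounded \<Omega>" "\<Omega> \<noteq> {}"
  obtains xb y where "xb \<in> \<Omega>" "y \<in> frontier \<Omega>" "bdist \<Omega> xb = inradius \<Omega>" "dist xb y = inradius \<Omega>"
    and "inradius \<Omega> > 0" and "\<And>x. x \<in> \<Omega> \<Longrightarrow> bdist \<Omega> x \<le> inradius \<Omega>"
proof -
  have frontier: "frontier \<Omega> \<noteq> {}"
    using frontier_not_empty assms(2,3) not_bounded_UNIV by blast
  have pos: "bdist \<Omega> x > 0" if "x \<in> \<Omega>" for x
    using that assms(1) infdist_pos_not_in_closed[OF frontier_closed frontier]
    by (simp add: bdist_def frontier_def interior_open)
  have "continuous_on (closure \<Omega>) (bdist \<Omega>)"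
    unfolding bdist_def[abs_def] by (intro continuous_intros)
  then obtain xb where xb: "xb \<in> closure \<Omega>" "\<And>x. x \<in> closure \<Omega> \<Longrightarrow> bdist \<Omega> x \<le> bdist \<Omega> xb"
    using continuous_attains_sup[of "closure \<Omega>" "bdist \<Omega>"] assms(2,3) compact_closure by auto
  have \<rho>: "inradius \<Omega> = bdist \<Omega> xb"
    unfolding inradius_def using xb by (intro cSup_eq_maximum) auto
  obtain x where "x \<in> \<Omega>"
    using assms(3) by blast
  then have "bdist \<Omega> xb > 0"
    using pos xb(2) closure_subset by force
  then have "xb \<in> \<Omega>"
    using xb(1) by (auto simp: closure_Un_frontier bdist_def)
  moreover obtain y where "y \<in> frontier \<Omega>" "bdist \<Omega> xb = dist xb y"
    using infdist_attains_inf[OF frontier_closed frontier] unfolding bdist_def by metis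
  ultimately show thesis
    using that pos xb(2) closure_subset \<rho> by (metis subsetD)
qed

lemma bdist_along_nearest_segment:
  fixes \<Omega> :: "'a::euclidean_space set"
  assumes x: "x \<in> \<Omega>" and y: "y \<in> frontier \<Omega>" "dist x y = bdist \<Omega> x"
    and s: "0 < s" "s \<le> bdist \<Omega> x"
  obtains p where "p \<in> \<Omega>" "dist p y = s" "dist p x = bdist \<Omega> x - s" "bdist \<Omega> p = s"
proof
  define d where "d = bdist \<Omega> x"
  define p where "p = y + (s / d) *\<^sub>R (x - y)"
  have d: "d > 0" "norm (x - y) = d"
    using s y(2) by (simp_all add: d_def dist_norm)
  show py: "dist p y = s"
    using d s by (simp add: p_def dist_norm)
  have "x - p = (1 - s / d) *\<^sub>R (x - y)"
    by (simp add: p_def algebra_simps)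
  then have "dist p x = \<bar>1 - s / d\<bar> * d"
    using d by (metis dist_commute dist_norm norm_scaleR)
  also have "\<dots> = d - s"
    using d s by (simp add: d_def field_simps)
  finally show px: "dist p x = bdist \<Omega> x - s"
    by (simp add: d_def)
  show "bdist \<Omega> p = s"
    using bdist_le_dist_frontier[OF y(1), of p] bdist_lipschitz[of \<Omega> x p] py px
    by (simp add: dist_commute)
  show "p \<in> \<Omega>"
    using ball_bdist_subset[OF x] px s by (auto simp: dist_commute)
qed

lemma continuous_on_Icc_left_endpoint_le:
  fixes f :: "real \<Rightarrow> real"
  assumes f: "continuous_on {a..b} f" and "a < b" and le: "\<And>t. a < t \<Longrightarrow> t \<le> b \<Longrightarrow> f t \<le> c"
  shows "f a \<le> c"
proof -
  have "(f \<longlongrightarrow> f a) (at_right a)"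
    using f \<open>a < b\<close> unfolding continuous_on_def at_within_Icc_at_right[OF \<open>a < b\<close>, symmetric] by simp
  moreover have "\<forall>\<^sub>F t in at_right a. f t \<le> c"
    unfolding eventually_at_right_field using \<open>a < b\<close> le by (intro exI[of _ b]) auto
  ultimately show ?thesis
    using trivial_limit_at_right_real tendsto_upperbound by blast
qed

lemma viscosity_profile_mono_pos:
  fixes \<Omega> :: "'a::euclidean_space set" and f :: "real \<Rightarrow> real"
  assumes visc: "viscosity_solution \<Omega> (\<lambda>x. f (bdist \<Omega> x))"
    and f: "continuous_on {0..\<rho>} f"
    and le: "\<And>x. x \<in> \<Omega> \<Longrightarrow> bdist \<Omega> x \<le> \<rho>"
    and levels: "\<And>s. 0 < s \<Longrightarrow> s \<le> \<rho> \<Longrightarrow> \<exists>x\<in>\<Omega>. bdist \<Omega> x = s"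
    and ab: "0 < a" "a \<le> b" "b \<le> \<rho>"
  shows "f a \<le> f b"
proof -
  have "continuous_on {a..\<rho>} f"
    using ab by (auto intro: continuous_on_subset[OF f])
  then obtain s0 where s0: "s0 \<in> {a..\<rho>}" "\<And>s. s \<in> {a..\<rho>} \<Longrightarrow> f s0 \<le> f s"
    using continuous_attains_inf[of "{a..\<rho>}" f] ab by auto
  \<comment> \<open>Otherwise \<open>f \<circ> bdist\<close> would have a local minimum where \<open>bdist = s0\<close>.\<close>
  have "f a \<le> f s0"
  proof (rule ccontr)
    assume "\<not> f a \<le> f s0"
    then have "a < s0"
      using s0(1) by (cases "a = s0") auto
    obtain x where x: "x \<in> \<Omega>" "bdist \<Omega> x = s0"
      using levels[of s0] s0(1) ab by auto
    have "f (bdist \<Omega> x) \<le> f (bdist \<Omega> z)" if z: "z \<in> \<Omega> \<inter> ball x (s0 - a)" for z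
    proof -
      have "bdist \<Omega> z \<in> {a..\<rho>}"
        using z x bdist_lipschitz[of \<Omega> x z] le[of z] by auto
      then show ?thesis
        using s0(2) x(2) by simp
    qed
    then have "\<exists>e>0. \<forall>z\<in>\<Omega> \<inter> ball x e. f (bdist \<Omega> x) \<le> f (bdist \<Omega> z)"
      using \<open>a < s0\<close> by (intro exI[of _ "s0 - a"]) auto
    then show False
      using viscosity_solution_no_local_min[OF visc x(1)] by simp
  qed
  also have "f s0 \<le> f b"
    using s0(2) ab by simp
  finally show ?thesis .
qed

lemma viscosity_profile_mono:
  fixes \<Omega> :: "'a::euclidean_space set" and f :: "real \<Rightarrow> real"
  assumes visc: "viscosity_solution \<Omega> (\<lambda>x. f (bdist \<Omega> x))"
    and f: "continuous_on {0..\<rho>} f"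
    and le: "\<And>x. x \<in> \<Omega> \<Longrightarrow> bdist \<Omega> x \<le> \<rho>"
    and levels: "\<And>s. 0 < s \<Longrightarrow> s \<le> \<rho> \<Longrightarrow> \<exists>x\<in>\<Omega>. bdist \<Omega> x = s"
    and ab: "0 \<le> a" "a \<le> b" "b \<le> \<rho>"
  shows "f a \<le> f b"
proof (cases "a = 0")
  case True
  show ?thesis
  proof (cases "b = 0")
    case False
    have "continuous_on {0..b} f"
      using ab by (auto intro: continuous_on_subset[OF f])
    moreover have "f t \<le> f b" if "0 < t" "t \<le> b" for t
      using viscosity_profile_mono_pos[OF visc f le levels that ab(3)] .
    ultimately show ?thesis
      using True False ab by (auto intro: continuous_on_Icc_left_endpoint_le[of 0 b])
  qed (use True in simp)
next
  case False
  then show ?thesis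
    using viscosity_profile_mono_pos[OF visc f le levels _ ab(2,3)] ab(1) by simp
qed

lemma radial_profile_subsolution:
  fixes \<Omega> :: "'a::euclidean_space set" and f :: "real \<Rightarrow> real" and \<phi> :: "'a \<Rightarrow> real"
  assumes visc: "viscosity_solution \<Omega> (\<lambda>x. f (bdist \<Omega> x))"
    and mono: "\<And>a b. 0 \<le> a \<Longrightarrow> a \<le> b \<Longrightarrow> b \<le> \<rho> \<Longrightarrow> f a \<le> f b"
    and y: "y \<in> frontier \<Omega>"
    and levels: "\<And>s. 0 < s \<Longrightarrow> s < \<rho> \<Longrightarrow> \<exists>x\<in>\<Omega>. dist x y = s \<and> bdist \<Omega> x = s"
    and \<phi>: "C2_on (ball 0 \<rho> - {0}) \<phi>" and z: "z \<in> ball 0 \<rho> - {0}"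
    and touch: "\<exists>e>0. \<forall>w\<in>(ball 0 \<rho> - {0}) \<inter> ball z e. \<phi> z - f (\<rho> - norm z) \<le> \<phi> w - f (\<rho> - norm w)"
  shows "- inf_laplacian \<phi> z \<le> 1"
proof -
  define r where "r = norm z"
  define k1 where "k1 = grad \<phi> z \<bullet> sgn z"
  define k2 where "k2 = hess \<phi> z (sgn z) \<bullet> sgn z"
  have r: "0 < r" "r < \<rho>"
    using z by (auto simp: r_def)
  have P: "open (ball 0 \<rho> - {0})" and "z \<noteq> 0"
    using z by auto
  note radial = radial_touching_below[where g = "\<lambda>t. f (\<rho> - t)", OF \<phi> P z \<open>z \<noteq> 0\<close> touch,
      folded r_def k1_def k2_def]
  have g: "\<exists>\<delta>>0. \<forall>h. \<bar>h\<bar> < \<delta> \<longrightarrow> f ((\<rho> - r) + h) \<le> f (\<rho> - r) + (- k1) * h + (k2 / 2 + \<epsilon>) * h\<^sup>2"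
    if \<epsilon>: "\<epsilon> > 0" for \<epsilon>
  proof -
    obtain \<delta> where "\<delta> > 0" and \<delta>: "\<forall>h. \<bar>h\<bar> < \<delta> \<longrightarrow> f (\<rho> - (r + h)) \<le> f (\<rho> - r) + k1 * h + (k2 / 2 + \<epsilon>) * h\<^sup>2"
      using radial(2)[OF \<epsilon>] by auto
    show ?thesis
      using \<delta>[rule_format, of "- _"] \<open>\<delta> > 0\<close> by (intro exI[of _ \<delta>]) (auto simp: algebra_simps)
  qed
  obtain x0 where x0: "x0 \<in> \<Omega>" "dist x0 y = \<rho> - r" "bdist \<Omega> x0 = \<rho> - r"
    using levels[of "\<rho> - r"] r by auto
  have "f (bdist \<Omega> x) \<le> f (dist x y)" if "x \<in> \<Omega> \<inter> ball x0 r" for x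
    using that x0(2) dist_triangle[of x y x0] bdist_le_dist_frontier[OF y, of x]
    by (intro mono) (auto simp: bdist_def infdist_nonneg dist_commute)
  then have below: "\<exists>e>0. \<forall>x\<in>\<Omega> \<inter> ball x0 e. f (bdist \<Omega> x) \<le> f (dist x y)"
    using r by blast
  have "- (2 * (- k1)\<^sup>2 * (k2 / 2)) \<le> 1"
    by (rule viscosity_sub_radial_comparison[OF visc x0(1,2) _ _ below g]) (use x0(3) r in auto)
  then show ?thesis
    using radial(1) by simp
qed

lemma radial_profile_supersolution:
  fixes \<Omega> :: "'a::euclidean_space set" and f :: "real \<Rightarrow> real" and \<phi> :: "'a \<Rightarrow> real"
  assumes visc: "viscosity_solution \<Omega> (\<lambda>x. f (bdist \<Omega> x))"
    and mono: "\<And>a b. 0 \<le> a \<Longrightarrow> a \<le> b \<Longrightarrow> b \<le> \<rho> \<Longrightarrow> f a \<le> f b"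
    and le: "\<And>x. x \<in> \<Omega> \<Longrightarrow> bdist \<Omega> x \<le> \<rho>"
    and xb: "\<And>x. \<rho> - dist x xb \<le> bdist \<Omega> x"
    and levels: "\<And>r. 0 < r \<Longrightarrow> r < \<rho> \<Longrightarrow> \<exists>x\<in>\<Omega>. dist x xb = r \<and> bdist \<Omega> x = \<rho> - r"
    and \<phi>: "C2_on (ball 0 \<rho> - {0}) \<phi>" and z: "z \<in> ball 0 \<rho> - {0}"
    and touch: "\<exists>e>0. \<forall>w\<in>(ball 0 \<rho> - {0}) \<inter> ball z e. \<phi> w - f (\<rho> - norm w) \<le> \<phi> z - f (\<rho> - norm z)"
  shows "- inf_laplacian \<phi> z \<ge> 1"
proof -
  define r where "r = norm z"
  define k1 where "k1 = grad \<phi> z \<bullet> sgn z"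
  define k2 where "k2 = hess \<phi> z (sgn z) \<bullet> sgn z"
  have r: "0 < r" "r < \<rho>"
    using z by (auto simp: r_def)
  have P: "open (ball 0 \<rho> - {0})" and "z \<noteq> 0"
    using z by auto
  note radial = radial_touching_above[where g = "\<lambda>t. f (\<rho> - t)", OF \<phi> P z \<open>z \<noteq> 0\<close> touch,
      folded r_def k1_def k2_def]
  obtain x0 where x0: "x0 \<in> \<Omega>" "dist x0 xb = r" "bdist \<Omega> x0 = \<rho> - r"
    using levels r by blast
  have "f (\<rho> - dist x xb) \<le> f (bdist \<Omega> x)" if "x \<in> \<Omega> \<inter> ball x0 (\<rho> - r)" for x
    using that x0(2) dist_triangle[of x xb x0] xb[of x] le[of x]
    by (intro mono) (auto simp: dist_commute)
  then have above: "\<exists>e>0. \<forall>x\<in>\<Omega> \<inter> ball x0 e. f (\<rho> - dist x xb) \<le> f (bdist \<Omega> x)"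
    using r by (intro exI[of _ "\<rho> - r"]) auto
  have "- (2 * k1\<^sup>2 * (k2 / 2)) \<ge> 1"
    by (rule viscosity_super_radial_comparison[where g = "\<lambda>t. f (\<rho> - t)", OF visc x0(1,2) _ _ above radial(2)])
      (use x0(3) r in auto)
  then show ?thesis
    using radial(1) by simp
qed

lemma radial_profile_viscosity_solution:
  fixes \<Omega> :: "'a::euclidean_space set" and f :: "real \<Rightarrow> real"
  assumes visc: "viscosity_solution \<Omega> (\<lambda>x. f (bdist \<Omega> x))"
    and f: "continuous_on {0..\<rho>} f"
    and mono: "\<And>a b. 0 \<le> a \<Longrightarrow> a \<le> b \<Longrightarrow> b \<le> \<rho> \<Longrightarrow> f a \<le> f b"
    and le: "\<And>x. x \<in> \<Omega> \<Longrightarrow> bdist \<Omega> x \<le> \<rho>"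
    and y: "y \<in> frontier \<Omega>"
    and xb: "\<And>x. \<rho> - dist x xb \<le> bdist \<Omega> x"
    and levels: "\<And>s. 0 < s \<Longrightarrow> s < \<rho> \<Longrightarrow> \<exists>x\<in>\<Omega>. dist x y = s \<and> dist x xb = \<rho> - s \<and> bdist \<Omega> x = s"
  shows "viscosity_solution (ball (0::'a) \<rho> - {0}) (\<lambda>z. f (\<rho> - norm z))"
  unfolding viscosity_solution_def
proof (intro conjI allI impI)
  have "continuous_on (ball 0 \<rho> - {0}) (\<lambda>z::'a. \<rho> - norm z)"
    by (intro continuous_intros)
  then show "continuous_on (ball 0 \<rho> - {0}) (\<lambda>z::'a. f (\<rho> - norm z))"
    using continuous_on_compose2[OF f] by fastforce
next
  have levels_y: "\<exists>x\<in>\<Omega>. dist x y = s \<and> bdist \<Omega> x = s" if "0 < s" "s < \<rho>" for s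
    using levels[OF that] by blast
  fix \<phi> and z :: 'a
  assume "C2_on (ball 0 \<rho> - {0}) \<phi> \<and> z \<in> ball 0 \<rho> - {0} \<and>
    (\<exists>e>0. \<forall>w\<in>(ball 0 \<rho> - {0}) \<inter> ball z e. \<phi> z - f (\<rho> - norm z) \<le> \<phi> w - f (\<rho> - norm w))"
  then show "- inf_laplacian \<phi> z \<le> 1"
    by (elim conjE)
      (rule radial_profile_subsolution[where \<rho> = \<rho>, OF visc mono y levels_y]; assumption)
next
  have levels_xb: "\<exists>x\<in>\<Omega>. dist x xb = r \<and> bdist \<Omega> x = \<rho> - r" if "0 < r" "r < \<rho>" for r
    using levels[of "\<rho> - r"] that by auto
  fix \<phi> and z :: 'a
  assume "C2_on (ball 0 \<rho> - {0}) \<phi> \<and> z \<in> ball 0 \<rho> - {0} \<and>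
    (\<exists>e>0. \<forall>w\<in>(ball 0 \<rho> - {0}) \<inter> ball z e. \<phi> w - f (\<rho> - norm w) \<le> \<phi> z - f (\<rho> - norm z))"
  then show "- inf_laplacian \<phi> z \<ge> 1"
    by (elim conjE)
      (rule radial_profile_supersolution[where \<rho> = \<rho>, OF visc mono le xb levels_xb]; assumption)
qed

theorem proposition18:
  fixes \<Omega> :: "'a::euclidean_space set" and f :: "real \<Rightarrow> real"
  assumes "open \<Omega>" and "bounded \<Omega>" and "\<Omega> \<noteq> {}"
    and "continuous_on {0..inradius \<Omega>} f"
    and "viscosity_solution \<Omega> (\<lambda>x. f (bdist \<Omega> x))"
  shows "(\<forall>t1 t2. 0 \<le> t1 \<and> t1 < t2 \<and> t2 \<le> inradius \<Omega> \<longrightarrow> f t1 \<le> f t2)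
    \<and> viscosity_solution (ball (0::'a) (inradius \<Omega>) - {0})
        (\<lambda>z. f (inradius \<Omega> - norm z))"
proof -
  define \<rho> where "\<rho> = inradius \<Omega>"
  obtain xb y where xb: "xb \<in> \<Omega>" "bdist \<Omega> xb = \<rho>" and y: "y \<in> frontier \<Omega>" "dist xb y = \<rho>"
    and le: "\<And>x. x \<in> \<Omega> \<Longrightarrow> bdist \<Omega> x \<le> \<rho>"
    using inradius_witnesses[OF assms(1-3)] unfolding \<rho>_def by metis
  have segment: "\<exists>x\<in>\<Omega>. dist x y = s \<and> dist x xb = \<rho> - s \<and> bdist \<Omega> x = s"
    if "0 < s" "s \<le> \<rho>" for s
    using bdist_along_nearest_segment[OF xb(1) y(1), of s] xb(2) y(2) that by metis
  have mono: "f a \<le> f b" if "0 \<le> a" "a \<le> b" "b \<le> \<rho>" for a b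
    using viscosity_profile_mono[OF assms(5) assms(4)[folded \<rho>_def] le _ that] segment by blast
  have "\<rho> - dist x xb \<le> bdist \<Omega> x" for x
    using bdist_lipschitz[of \<Omega> xb x] xb(2) by (simp add: dist_commute)
  then have "viscosity_solution (ball (0::'a) \<rho> - {0}) (\<lambda>z. f (\<rho> - norm z))"
    using radial_profile_viscosity_solution[OF assms(5) assms(4)[folded \<rho>_def] mono le y(1)] segment
    by fastforce
  then show ?thesis
    using mono unfolding \<rho>_def by auto
qed

end
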